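(* For every $A\in P(n)$, $$I(2,A)=\inf\Big\{\Big(\sum_{i=1}^n D_{ii}^{-2}\Big)^{-1/2}: D>0 \text{ diagonal},\ A\circ\bar A\le D^2\Big\}=\inf\{I(2,D): D>0 \text{ diagonal},\ A\circ\bar A\le D^2\}.$$
   Context: $P(n)$ denotes positive semidefinite complex $n\times n$ matrices, $\circ$ the Hadamard product, $\bar A$ the entrywise conjugate, $\le$ the Loewner order. $I(2,C)=\min\{\|C\circ B\|_2: B\in P(n),\ \|B\|_2=1\}$ with $\|\cdot\|_2$ the Frobenius norm. *)

theory Defs
  imports "HOL-Analysis.Analysis"
begin

definition psd :: "complex^'n^'n \<Rightarrow> bool" where
  "psd A \<longleftrightarrow> (\<forall>i j. A$i$j = cnj (A$j$i)) \<and>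
     (\<forall>x::complex^'n. 0 \<le> Re (\<Sum>i\<in>UNIV. \<Sum>j\<in>UNIV. cnj (x$i) * A$i$j * x$j))"

definition loewner_le :: "complex^'n^'n \<Rightarrow> complex^'n^'n \<Rightarrow> bool" where
  "loewner_le A B \<longleftrightarrow> psd (B - A)"

definition hadamard :: "complex^'n^'n \<Rightarrow> complex^'n^'n \<Rightarrow> complex^'n^'n" where
  "hadamard A B = (\<chi> i j. A$i$j * B$i$j)"

definition conj_mat :: "complex^'n^'n \<Rightarrow> complex^'n^'n" where
  "conj_mat A = (\<chi> i j. cnj (A$i$j))"

definition frob :: "complex^'n^'n \<Rightarrow> real" where
  "frob A = sqrt (\<Sum>i\<in>UNIV. \<Sum>j\<in>UNIV. (cmod (A$i$j))\<^sup>2)"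

text \<open>I(2,C) = min { ||C o B||_2 : B psd, ||B||_2 = 1 } (the min is attained; we write Inf).\<close>
definition I2 :: "complex^'n^'n \<Rightarrow> real" where
  "I2 C = Inf {frob (hadamard C B) | B. psd B \<and> frob B = 1}"

definition pos_diag :: "complex^'n^'n \<Rightarrow> bool" where
  "pos_diag D \<longleftrightarrow> (\<forall>i j. i \<noteq> j \<longrightarrow> D$i$j = 0) \<and> (\<forall>i. Im (D$i$i) = 0 \<and> Re (D$i$i) > 0)"

end

theory Submission
  imports Defs
begin

(* Write C = A o conj A. For a diagonal D > 0 with C <= D^2, the rank-one matrix B = v v^* with
   v_i^2 proportional to D_ii^-2 has ||B||_2 = 1 and ||A o B||_2^2 = w^T C w <= w^T D^2 w
   = (sum_i D_ii^-2)^-1 for w = (v_i^2); so I(2,A) is at most the infimum.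
   Conversely, a psd B with ||B||_2 = 1 is a sum of mutually orthogonal rank-one matrices
   g_k g_k^*, and ||A o B||_2^2 = sum_{k,l} z_kl^* C z_kl with z_kl = conj g_k o g_l. As C is psd
   (Schur product theorem), this is at least sum_k w_k^T C w_k for the nonnegative vectors
   w_k = |g_k|^2, while ||B||_2^2 = sum_k (sum_i w_k i)^2 by orthogonality. For nonnegative w the
   Schur test with weights w + t produces dominating diagonals D with
   (sum_i D_ii^-2)^-1 <= w^T C w / (sum_i w_i)^2 + o(1) as t -> 0, which gives the reverse
   inequality. For diagonal A = D the infimum is attained at D itself; this yields
   I(2,D) = (sum_i D_ii^-2)^-1/2 and hence the second formula. *)

section \<open>Hermitian forms on complex vectors\<close>

definition cinner :: "complex^'n \<Rightarrow> complex^'n \<Rightarrow> complex" where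
  "cinner x y = (\<Sum>i\<in>UNIV. cnj (x$i) * y$i)"

definition hermitian :: "complex^'n^'n \<Rightarrow> bool" where
  "hermitian M \<longleftrightarrow> (\<forall>i j. M$i$j = cnj (M$j$i))"

definition outer :: "complex^'n \<Rightarrow> complex^'n^'n" where
  "outer v = (\<chi> i j. v$i * cnj (v$j))"

lemma cinner_mat_vec: "cinner x (M *v y) = (\<Sum>i\<in>UNIV. \<Sum>j\<in>UNIV. cnj (x$i) * M$i$j * y$j)"
  unfolding cinner_def matrix_vector_mult_def by (simp add: sum_distrib_left mult.assoc)

lemma psd_iff: "psd M \<longleftrightarrow> hermitian M \<and> (\<forall>x. 0 \<le> Re (cinner x (M *v x)))"
  unfolding psd_def hermitian_def cinner_mat_vec ..

lemma cinner_cnj: "cnj (cinner x y) = cinner y x"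
  unfolding cinner_def by (simp add: mult.commute)

lemma cinner_add_left: "cinner (x + y) z = cinner x z + cinner y z"
  and cinner_add_right: "cinner x (y + z) = cinner x y + cinner x z"
  and cinner_diff_left: "cinner (x - y) z = cinner x z - cinner y z"
  and cinner_diff_right: "cinner x (y - z) = cinner x y - cinner x z"
  and cinner_scale_left: "cinner (c *s x) z = cnj c * cinner x z"
  and cinner_scale_right: "cinner x (c *s z) = c * cinner x z"
  unfolding cinner_def
  by (simp_all add: algebra_simps sum.distrib sum_subtractf sum_distrib_left)

lemma cinner_zero_right [simp]: "cinner x 0 = 0"
  unfolding cinner_def by simp

lemma cinner_sum_right: "cinner x (\<Sum>k\<in>S. f k) = (\<Sum>k\<in>S. cinner x (f k))"
  unfolding cinner_def by (simp add: sum_distrib_left) (rule sum.swap)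

lemma norm_sq_vec: "(norm (x::complex^'n))\<^sup>2 = (\<Sum>i\<in>UNIV. (cmod (x$i))\<^sup>2)"
  unfolding norm_vec_def L2_set_def by (simp add: sum_nonneg)

lemma cinner_self: "cinner x x = of_real ((norm x)\<^sup>2)"
  unfolding cinner_def norm_sq_vec
  by (simp add: of_real_sum complex_norm_square mult.commute del: of_real_power)

lemma cinner_axis: "cinner (axis i 1) y = y$i"
proof -
  have "cinner (axis i 1) y = (\<Sum>k\<in>UNIV. if k = i then y$i else 0)"
    unfolding cinner_def axis_def by (intro sum.cong) auto
  then show ?thesis by simp
qed

lemma mat_vec_scalar: "mat c *v x = c *s (x::complex^'n)"
  by (simp add: vec_eq_iff matrix_vector_mult_def mat_def if_distrib if_distribR cong: if_cong)

lemma mat_vec_scale: "M *v (c *s x) = c *s (M *v (x::complex^'n))"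
  by (simp add: vec_eq_iff matrix_vector_mult_def sum_distrib_left mult_ac)

lemma mat_vec_axis: "(M *v axis j 1) $ i = M$i$j"
proof -
  have "(M *v axis j 1) $ i = (\<Sum>k\<in>UNIV. if k = j then M$i$j else 0)"
    unfolding matrix_vector_mult_def axis_def vec_lambda_beta by (intro sum.cong) auto
  then show ?thesis by simp
qed

lemma scaleR_eq_smult: "r *\<^sub>R (x::complex^'n) = complex_of_real r *s x"
  unfolding vec_eq_iff vector_scaleR_component by (simp add: scaleR_conv_of_real)

lemma sum_mat_vec: "(\<Sum>k\<in>S. M k) *v x = (\<Sum>k\<in>S. M k *v x)"
  by (induction S rule: infinite_finite_induct) (simp_all add: matrix_vector_mult_add_rdistrib)

lemma outer_mat_vec: "outer v *v x = cinner v x *s v"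
  unfolding outer_def matrix_vector_mult_def cinner_def
  by (simp add: vec_eq_iff sum_distrib_left mult_ac)

lemma sum_outer_mat_vec: "(\<Sum>k\<in>S. outer (g k)) *v x = (\<Sum>k\<in>S. cinner (g k) x *s g k)"
  unfolding sum_mat_vec outer_mat_vec ..

lemma hermitian_cinner_mat_vec:
  assumes "hermitian M"
  shows "cinner x (M *v y) = cinner (M *v x) y"
proof -
  have cnj_M: "cnj (M$i$j) = M$j$i" for i j
    using assms unfolding hermitian_def by (metis complex_cnj_cnj)
  have "cinner (M *v x) y = (\<Sum>j\<in>UNIV. \<Sum>i\<in>UNIV. cnj (x$i) * M$i$j * y$j)"
    unfolding cinner_def matrix_vector_mult_def
    by (simp add: cnj_M sum_distrib_left mult_ac)
  also have "\<dots> = cinner x (M *v y)"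
    unfolding cinner_mat_vec by (rule sum.swap)
  finally show ?thesis by simp
qed

lemma hermitian_diff:
  assumes "hermitian M" "hermitian N"
  shows "hermitian (M - N)"
  unfolding hermitian_def
proof (intro allI)
  fix i j
  have "M$i$j = cnj (M$j$i)" "N$i$j = cnj (N$j$i)"
    using assms unfolding hermitian_def by blast+
  then show "(M - N)$i$j = cnj ((M - N)$j$i)" by simp
qed

lemma hermitian_outer: "hermitian (outer v)"
  unfolding hermitian_def outer_def by simp

lemma cinner_sum_outer_self:
  "cinner x ((\<Sum>k\<in>S. outer (g k)) *v x) = of_real (\<Sum>k\<in>S. (cmod (cinner (g k) x))\<^sup>2)"
proof -
  have "cinner x ((\<Sum>k\<in>S. outer (g k)) *v x) = (\<Sum>k\<in>S. cinner (g k) x * cinner x (g k))"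
    unfolding sum_outer_mat_vec cinner_sum_right cinner_scale_right ..
  also have "\<dots> = (\<Sum>k\<in>S. of_real ((cmod (cinner (g k) x))\<^sup>2))"
    unfolding complex_norm_square cinner_cnj ..
  finally show ?thesis by simp
qed

lemma psd_sum_outer: "psd (\<Sum>k\<in>S. outer (g k))"
  unfolding psd_iff
proof (intro conjI allI)
  show "hermitian (\<Sum>k\<in>S. outer (g k))"
    unfolding hermitian_def outer_def by (simp add: mult.commute)
  show "0 \<le> Re (cinner x ((\<Sum>k\<in>S. outer (g k)) *v x))" for x
    unfolding cinner_sum_outer_self by (simp add: sum_nonneg)
qed

lemma psd_outer: "psd (outer v)"
  using psd_sum_outer[of "\<lambda>_. v" "{()}"] by simp

lemma loewner_le_refl: "loewner_le M M"
  unfolding loewner_le_def psd_iff hermitian_def by simp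

lemma loewner_le_Re_cinner:
  "loewner_le M N \<Longrightarrow> Re (cinner x (M *v x)) \<le> Re (cinner x (N *v x))"
  unfolding loewner_le_def psd_iff by (simp add: matrix_vector_mult_diff_rdistrib cinner_diff_right)

lemma loewner_le_diag_entry:
  assumes "loewner_le M N"
  shows "Re (M$i$i) \<le> Re (N$i$i)"
proof -
  have "cinner (axis i 1) ((N - M) *v axis i 1) = N$i$i - M$i$i"
    unfolding cinner_axis mat_vec_axis by simp
  then show ?thesis
    using assms unfolding loewner_le_def psd_iff by (metis minus_complex.sel(1) diff_ge_0_iff_ge)
qed

section \<open>Orthogonal rank-one decomposition of psd matrices\<close>

lemma nonneg_quadratic_imp_linear_coeff_eq_0:
  fixes s q :: real
  assumes nonneg: "\<And>t. 0 \<le> 2 * t * s + t\<^sup>2 * q"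
  shows "s = 0"
proof (rule ccontr)
  assume "s \<noteq> 0"
  have "0 \<le> q" using nonneg[of 1] nonneg[of "-1"] by simp
  define t where "t = - s / (q + 1)"
  have tq: "t * (q + 1) = - s" using \<open>0 \<le> q\<close> by (simp add: t_def)
  have "(2 * t * s + t\<^sup>2 * q) * (q + 1)\<^sup>2 = 2 * s * (t * (q + 1)) * (q + 1) + (t * (q + 1))\<^sup>2 * q"
    by (simp add: power2_eq_square algebra_simps)
  also have "\<dots> = - s\<^sup>2 * (q + 2)"
    unfolding tq by (simp add: power2_eq_square algebra_simps)
  also have "\<dots> < 0" using \<open>s \<noteq> 0\<close> \<open>0 \<le> q\<close> by (simp add: mult_pos_pos)
  finally show False
    using nonneg[of t] by (simp add: mult_less_0_iff)
qed

lemma psd_mat_vec_eq_0: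
  assumes P: "psd P" and zero: "Re (cinner v (P *v v)) = 0"
  shows "P *v v = 0"
proof -
  have herm: "hermitian P" and pos: "\<And>x. 0 \<le> Re (cinner x (P *v x))"
    using P psd_iff by auto
  define y where "y = P *v v"
  have "\<And>t. 0 \<le> 2 * t * (norm y)\<^sup>2 + t\<^sup>2 * Re (cinner y (P *v y))"
  proof -
    fix t :: real
    have "cinner v (P *v y) = cinner y y"
      unfolding hermitian_cinner_mat_vec[OF herm] y_def ..
    then have "Re (cinner (v + of_real t *s y) (P *v (v + of_real t *s y)))
        = 2 * t * (norm y)\<^sup>2 + t\<^sup>2 * Re (cinner y (P *v y))"
      using zero
      by (simp add: matrix_vector_right_distrib mat_vec_scale cinner_add_left cinner_add_right
          cinner_scale_left cinner_scale_right cinner_self y_def[symmetric] power2_eq_square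
          algebra_simps)
    then show "0 \<le> 2 * t * (norm y)\<^sup>2 + t\<^sup>2 * Re (cinner y (P *v y))"
      using pos by metis
  qed
  then have "(norm y)\<^sup>2 = 0" by (rule nonneg_quadratic_imp_linear_coeff_eq_0)
  then show ?thesis unfolding y_def by simp
qed

lemma quadratic_form_le_sphere_bound:
  assumes max: "\<And>y. norm y = 1 \<Longrightarrow> Re (cinner y (B *v y)) \<le> lam"
  shows "Re (cinner x (B *v x)) \<le> lam * (norm x)\<^sup>2"
proof (cases "x = 0")
  case True
  then show ?thesis by simp
next
  case False
  define y where "y = (1 / norm x) *\<^sub>R x"
  have "norm y = 1" using False by (simp add: y_def)
  have "cinner y (B *v y) = of_real ((1 / norm x)\<^sup>2) * cinner x (B *v x)"
    by (simp add: y_def scaleR_eq_smult mat_vec_scale cinner_scale_left cinner_scale_right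
        power2_eq_square)
  then have "Re (cinner x (B *v x)) / (norm x)\<^sup>2 \<le> lam"
    using max[OF \<open>norm y = 1\<close>] by (simp add: field_simps)
  then show ?thesis using False by (simp add: field_simps)
qed

lemma psd_top_eigenvector:
  assumes B: "psd B" and "B \<noteq> 0"
  obtains v lam where "norm v = 1" "lam > 0" "B *v v = of_real lam *s v"
proof -
  have "\<exists>v\<in>sphere 0 1. \<forall>y\<in>sphere 0 1. Re (cinner y (B *v y)) \<le> Re (cinner v (B *v v))"
  proof (rule continuous_attains_sup)
    have "axis undefined 1 \<in> sphere (0::complex^'n) 1" by simp
    then show "sphere (0::complex^'n) 1 \<noteq> {}" by blast
    show "continuous_on (sphere 0 1) (\<lambda>y. Re (cinner y (B *v y)))"
      unfolding cinner_mat_vec by (intro continuous_intros)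
  qed simp
  then obtain v where v: "norm v = 1"
    and max: "\<And>y. norm y = 1 \<Longrightarrow> Re (cinner y (B *v y)) \<le> Re (cinner v (B *v v))"
    by auto
  define lam where "lam = Re (cinner v (B *v v))"
  have le: "Re (cinner x (B *v x)) \<le> lam * (norm x)\<^sup>2" for x
    using quadratic_form_le_sphere_bound max unfolding lam_def by blast
  have herm: "hermitian B" and pos: "\<And>x. 0 \<le> Re (cinner x (B *v x))"
    using B psd_iff by auto
  define Q where "Q = mat (of_real lam) - B"
  have Q_form: "Re (cinner x (Q *v x)) = lam * (norm x)\<^sup>2 - Re (cinner x (B *v x))" for x
    by (simp add: Q_def matrix_vector_mult_diff_rdistrib mat_vec_scalar cinner_diff_right
        cinner_scale_right cinner_self)
  have "psd Q"
    unfolding psd_iff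
  proof
    show "hermitian Q"
      unfolding Q_def by (rule hermitian_diff[OF _ herm]) (simp add: hermitian_def mat_def)
    show "\<forall>x. 0 \<le> Re (cinner x (Q *v x))" using le by (simp add: Q_form)
  qed
  moreover have "Re (cinner v (Q *v v)) = 0" by (simp add: Q_form v lam_def)
  ultimately have "Q *v v = 0" by (rule psd_mat_vec_eq_0)
  then have Bv: "B *v v = of_real lam *s v"
    by (simp add: Q_def matrix_vector_mult_diff_rdistrib mat_vec_scalar)
  have "lam > 0"
  proof (rule ccontr)
    assume "\<not> lam > 0"
    then have "Re (cinner x (B *v x)) = 0" for x
      using le[of x] pos[of x] by (smt (verit) mult_nonpos_nonneg zero_le_power2)
    then have "B *v x = 0 *v x" for x using psd_mat_vec_eq_0[OF B] by simp
    then have "B = 0" by (simp add: matrix_eq)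
    with \<open>B \<noteq> 0\<close> show False ..
  qed
  from v this Bv show thesis by (rule that)
qed

lemma psd_deflation:
  fixes B :: "complex^'n^'n"
  assumes B: "psd B" and v: "norm v = 1" and Bv: "B *v v = of_real lam *s v" and "lam > 0"
  defines "B' \<equiv> B - outer (of_real (sqrt lam) *s v)"
  shows "psd B'" and "B' *v v = 0" and "dim {x. B *v x = 0} < dim {x. B' *v x = 0}"
proof -
  have herm: "hermitian B" and pos: "\<And>x. 0 \<le> Re (cinner x (B *v x))"
    using B psd_iff by auto
  have vv: "cinner v v = 1" using v by (simp add: cinner_self)
  have B'_mat_vec: "B' *v x = B *v x - (of_real lam * cinner v x) *s v" for x
    using \<open>lam > 0\<close>
    by (simp add: B'_def matrix_vector_mult_diff_rdistrib outer_mat_vec cinner_scale_left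
        flip: of_real_mult)
  show B'v: "B' *v v = 0"
    by (simp add: B'_mat_vec Bv vv)
  have v_orth_range: "cinner v (B *v x) = of_real lam * cinner v x" for x
    using hermitian_cinner_mat_vec[OF herm, of v x] by (simp add: Bv cinner_scale_left)
  show "psd B'"
    unfolding psd_iff
  proof (intro conjI allI)
    show herm': "hermitian B'"
      unfolding B'_def by (rule hermitian_diff[OF herm hermitian_outer])
    fix x
    define w where "w = x - cinner v x *s v"
    have "cinner v w = 0"
      by (simp add: w_def cinner_diff_right cinner_scale_right vv)
    have "B' *v x = B' *v w"
      by (simp add: w_def matrix_vector_mult_diff_distrib mat_vec_scale B'v)
    also have "\<dots> = B *v w"
      by (simp add: B'_mat_vec \<open>cinner v w = 0\<close>)
    finally have "cinner x (B' *v x) = cinner x (B *v w)" by simp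
    also have "\<dots> = cinner w (B *v w)"
      using \<open>cinner v w = 0\<close>
      by (simp add: w_def cinner_diff_left cinner_scale_left v_orth_range)
    finally show "0 \<le> Re (cinner x (B' *v x))" using pos by simp
  qed
  have "{x. B *v x = 0} \<subset> {x. B' *v x = 0}"
  proof
    show "{x. B *v x = 0} \<subseteq> {x. B' *v x = 0}"
    proof
      fix x assume "x \<in> {x. B *v x = 0}"
      then have "B *v x = 0" by simp
      moreover have "of_real lam * cinner v x = 0" using v_orth_range[of x] \<open>B *v x = 0\<close> by simp
      ultimately show "x \<in> {x. B' *v x = 0}" using \<open>lam > 0\<close> by (simp add: B'_mat_vec)
    qed
    have "v \<noteq> 0" using v by auto
    then have "B *v v \<noteq> 0" using Bv \<open>lam > 0\<close> by simp
    with B'v show "{x. B *v x = 0} \<noteq> {x. B' *v x = 0}" by blast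
  qed
  moreover have "span {x. M *v x = 0} = {x. M *v x = 0}" for M :: "complex^'n^'n"
    using linear_subspace_kernel[OF matrix_vector_mul_linear] by (simp only: span_eq_iff)
  ultimately show "dim {x. B *v x = 0} < dim {x. B' *v x = 0}"
    by (metis dim_psubset)
qed

lemma psd_orthogonal_decomposition:
  fixes B :: "complex^'n^'n"
  assumes "psd B"
  shows "\<exists>(r::nat) g. (\<forall>k<r. \<forall>l<r. k \<noteq> l \<longrightarrow> cinner (g k) (g l) = 0) \<and> B = (\<Sum>k<r. outer (g k))"
  using assms
proof (induction "DIM(complex^'n) - dim {x::complex^'n. B *v x = 0}" arbitrary: B rule: less_induct)
  case less
  show ?case
  proof (cases "B = 0")
    case True
    show ?thesis by (rule exI[where x="0::nat"]) (simp add: True)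
  next
    case False
    obtain v lam where v: "norm v = 1" and "lam > 0" and Bv: "B *v v = of_real lam *s v"
      using psd_top_eigenvector[OF less.prems False] by blast
    define g0 where "g0 = of_real (sqrt lam) *s v"
    define B' where "B' = B - outer g0"
    have "psd B'" and "B' *v v = 0" and dim_less: "dim {x. B *v x = 0} < dim {x. B' *v x = 0}"
      using psd_deflation[OF less.prems v Bv \<open>lam > 0\<close>] unfolding B'_def g0_def by auto
    moreover have "dim {x. B' *v x = 0} \<le> DIM(complex^'n)" by (rule dim_subset_UNIV)
    ultimately have "DIM(complex^'n) - dim {x. B' *v x = 0} < DIM(complex^'n) - dim {x. B *v x = 0}"
      by linarith
    then obtain r :: nat and g where g_orth: "\<forall>k<r. \<forall>l<r. k \<noteq> l \<longrightarrow> cinner (g k) (g l) = 0"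
      and B'_eq: "B' = (\<Sum>k<r. outer (g k))"
      using less.hyps \<open>psd B'\<close> by blast
    have "of_real (\<Sum>k<r. (cmod (cinner (g k) v))\<^sup>2) = cinner v (B' *v v)"
      unfolding B'_eq cinner_sum_outer_self ..
    then have "(\<Sum>k<r. (cmod (cinner (g k) v))\<^sup>2) = 0"
      using \<open>B' *v v = 0\<close> by (metis cinner_zero_right of_real_eq_0_iff)
    then have g_orth_v: "cinner (g k) v = 0" if "k < r" for k
      using that by (simp add: sum_nonneg_eq_0_iff)
    then have v_orth_g: "cinner v (g k) = 0" if "k < r" for k
      using that cinner_cnj[of "g k" v] by simp
    define g' where "g' k = (case k of 0 \<Rightarrow> g0 | Suc l \<Rightarrow> g l)" for k
    show ?thesis
    proof (intro exI conjI allI impI)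
      fix k l assume "k < Suc r" "l < Suc r" "k \<noteq> l"
      then show "cinner (g' k) (g' l) = 0"
        using g_orth g_orth_v v_orth_g
        by (cases k; cases l) (auto simp: g'_def g0_def cinner_scale_left cinner_scale_right)
    next
      have "B = outer g0 + B'" by (simp add: B'_def)
      also have "\<dots> = (\<Sum>k<Suc r. outer (g' k))"
        unfolding B'_eq sum.lessThan_Suc_shift by (simp add: g'_def)
      finally show "B = (\<Sum>k<Suc r. outer (g' k))" .
    qed
  qed
qed

section \<open>The Schur product theorem\<close>

lemma psd_conj_mat:
  fixes A :: "complex^'n^'n"
  assumes "psd A"
  shows "psd (conj_mat A)"
  unfolding psd_def
proof (intro conjI allI)
  fix i j
  have "A$i$j = cnj (A$j$i)" using assms unfolding psd_def by blast
  then show "conj_mat A $ i $ j = cnj (conj_mat A $ j $ i)"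
    unfolding conj_mat_def by simp
next
  fix x :: "complex^'n"
  define y where "y = (\<chi> k. cnj (x$k))"
  have "(\<Sum>i\<in>UNIV. \<Sum>j\<in>UNIV. cnj (x$i) * conj_mat A $ i $ j * x$j)
      = cnj (\<Sum>i\<in>UNIV. \<Sum>j\<in>UNIV. cnj (y$i) * A$i$j * y$j)"
    unfolding conj_mat_def y_def by simp
  moreover have "0 \<le> Re (\<Sum>i\<in>UNIV. \<Sum>j\<in>UNIV. cnj (y$i) * A$i$j * y$j)"
    using assms unfolding psd_def by blast
  ultimately show "0 \<le> Re (\<Sum>i\<in>UNIV. \<Sum>j\<in>UNIV. cnj (x$i) * conj_mat A $ i $ j * x$j)"
    by (simp only: cnj.sel)
qed

lemma hadamard_outer: "hadamard (outer u) (outer v) = outer (\<chi> i. u$i * v$i)"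
  unfolding hadamard_def outer_def by (simp add: vec_eq_iff mult_ac)

lemma hadamard_sum_left: "hadamard (\<Sum>k\<in>S. M k) N = (\<Sum>k\<in>S. hadamard (M k) N)"
  and hadamard_sum_right: "hadamard N (\<Sum>k\<in>S. M k) = (\<Sum>k\<in>S. hadamard N (M k))"
  unfolding hadamard_def by (simp_all add: vec_eq_iff sum_distrib_left sum_distrib_right)

lemma psd_hadamard:
  assumes "psd A" "psd B"
  shows "psd (hadamard A B)"
proof -
  obtain r :: nat and g where A: "A = (\<Sum>k<r. outer (g k))"
    using psd_orthogonal_decomposition[OF assms(1)] by blast
  obtain s :: nat and h where B: "B = (\<Sum>l<s. outer (h l))"
    using psd_orthogonal_decomposition[OF assms(2)] by blast
  have "hadamard A B = (\<Sum>(k, l)\<in>{..<r} \<times> {..<s}. outer (\<chi> i. g k $ i * h l $ i))"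
    unfolding A B hadamard_sum_left
    unfolding hadamard_sum_right hadamard_outer sum.cartesian_product ..
  also have "\<dots> = (\<Sum>p\<in>{..<r} \<times> {..<s}. outer ((\<lambda>(k, l). \<chi> i. g k $ i * h l $ i) p))"
    by (simp add: split_def)
  finally show ?thesis by (simp only: psd_sum_outer)
qed

lemma psd_hadamard_conj: "psd A \<Longrightarrow> psd (hadamard A (conj_mat A))"
  by (intro psd_hadamard psd_conj_mat)

lemma hadamard_conj_entry: "hadamard A (conj_mat A) $ i $ j = of_real ((cmod (A$i$j))\<^sup>2)"
  unfolding hadamard_def conj_mat_def by (simp add: complex_norm_square del: of_real_power)

section \<open>Frobenius norms of Hadamard products\<close>

lemma frob_sq: "(frob M)\<^sup>2 = (\<Sum>i\<in>UNIV. \<Sum>j\<in>UNIV. (cmod (M$i$j))\<^sup>2)"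
  unfolding frob_def by (simp add: sum_nonneg)

lemma frob_nonneg: "0 \<le> frob M"
  unfolding frob_def by (simp add: sum_nonneg)

lemma frob_outer: "frob (outer v) = (norm v)\<^sup>2"
proof -
  have "(frob (outer v))\<^sup>2 = ((norm v)\<^sup>2)\<^sup>2"
    unfolding frob_sq outer_def norm_sq_vec
    by (simp add: norm_mult power_mult_distrib sum_product power2_eq_square mult_ac)
  then show ?thesis by (rule power2_eq_iff_nonneg[OF frob_nonneg zero_le_power2, THEN iffD1])
qed

lemma frob_hadamard_sq:
  "(frob (hadamard A B))\<^sup>2 = Re (\<Sum>i\<in>UNIV. \<Sum>j\<in>UNIV. hadamard A (conj_mat A) $ i $ j * (B$i$j * cnj (B$i$j)))"
  unfolding frob_sq hadamard_conj_entry unfolding hadamard_def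
  by (simp add: norm_mult power_mult_distrib flip: complex_norm_square)

lemma weighted_sum_sq_entries_decomp:
  assumes "B = (\<Sum>k<r. outer (g k))"
  defines "z k l \<equiv> (\<chi> i. cnj (g k $ i) * g l $ i)"
  shows "(\<Sum>i\<in>UNIV. \<Sum>j\<in>UNIV. C$i$j * (B$i$j * cnj (B$i$j)))
       = (\<Sum>k<r. \<Sum>l<r. cinner (z k l) (C *v z k l))"
proof -
  have B_entry: "B$i$j = (\<Sum>k<r. g k $ i * cnj (g k $ j))" for i j
    unfolding assms(1) by (simp add: outer_def)
  have "(\<Sum>i\<in>UNIV. \<Sum>j\<in>UNIV. C$i$j * (B$i$j * cnj (B$i$j)))
      = (\<Sum>i\<in>UNIV. \<Sum>j\<in>UNIV. \<Sum>l<r. \<Sum>k<r. g k $ i * cnj (g l $ i) * C$i$j * (cnj (g k $ j) * g l $ j))"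
    unfolding B_entry by (simp add: sum_product sum_distrib_left mult_ac)
  also have "\<dots> = (\<Sum>i\<in>UNIV. \<Sum>j\<in>UNIV. \<Sum>k<r. \<Sum>l<r. g k $ i * cnj (g l $ i) * C$i$j * (cnj (g k $ j) * g l $ j))"
    by (rule sum.cong[OF refl], rule sum.cong[OF refl], rule sum.swap)
  also have "\<dots> = (\<Sum>k<r. \<Sum>i\<in>UNIV. \<Sum>l<r. \<Sum>j\<in>UNIV. g k $ i * cnj (g l $ i) * C$i$j * (cnj (g k $ j) * g l $ j))"
    by (subst sum.swap, rule sum.cong[OF refl], subst sum.swap, rule sum.cong[OF refl], rule sum.swap)
  also have "\<dots> = (\<Sum>k<r. \<Sum>l<r. \<Sum>i\<in>UNIV. \<Sum>j\<in>UNIV. g k $ i * cnj (g l $ i) * C$i$j * (cnj (g k $ j) * g l $ j))"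
    by (rule sum.cong[OF refl], rule sum.swap)
  also have "\<dots> = (\<Sum>k<r. \<Sum>l<r. cinner (z k l) (C *v z k l))"
    unfolding cinner_mat_vec z_def by simp
  finally show ?thesis .
qed

lemma cinner_ones_mat_vec: "cinner z ((\<chi> i j. 1) *v z) = of_real ((cmod (\<Sum>i\<in>UNIV. z$i))\<^sup>2)"
  unfolding cinner_mat_vec complex_norm_square by (simp add: sum_product mult.commute, rule sum.swap)

lemma frob_sq_le_hadamard_weighted_sum:
  fixes B C :: "complex^'n^'n"
  assumes C: "psd C" and B: "psd B"
    and test: "\<And>w. (\<And>i. 0 \<le> w i) \<Longrightarrow>
      \<mu> * (\<Sum>i\<in>UNIV. w i)\<^sup>2 \<le> Re (cinner (\<chi> i. of_real (w i)) (C *v (\<chi> i. of_real (w i))))"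
  shows "\<mu> * (frob B)\<^sup>2 \<le> Re (\<Sum>i\<in>UNIV. \<Sum>j\<in>UNIV. C$i$j * (B$i$j * cnj (B$i$j)))"
proof -
  obtain r :: nat and g where orth: "\<forall>k<r. \<forall>l<r. k \<noteq> l \<longrightarrow> cinner (g k) (g l) = 0"
    and B_eq: "B = (\<Sum>k<r. outer (g k))"
    using psd_orthogonal_decomposition[OF B] by blast
  define z where "z k l = (\<chi> i. cnj (g k $ i) * g l $ i)" for k l
  define w where "w k i = (cmod (g k $ i))\<^sup>2" for k i
  have z_diag: "z k k = (\<chi> i. of_real (w k i))" for k
    by (simp add: z_def w_def vec_eq_iff complex_norm_square mult.commute del: of_real_power)
  have decomp: "(\<Sum>i\<in>UNIV. \<Sum>j\<in>UNIV. M$i$j * (B$i$j * cnj (B$i$j)))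
      = (\<Sum>k<r. \<Sum>l<r. cinner (z k l) (M *v z k l))" for M
    unfolding z_def by (rule weighted_sum_sq_entries_decomp[OF B_eq])
  (* With the all-ones matrix in place of C the decomposition computes (frob B)^2, and
     orthogonality of the g k removes its terms with k \<noteq> l. *)
  have off_diag: "cinner (z k l) ((\<chi> i j. 1) *v z k l) = 0" if "k < r" "l < r" "k \<noteq> l" for k l
    using orth that unfolding cinner_ones_mat_vec by (simp add: z_def cinner_def)
  have diag_only: "(\<Sum>l<r. Re (cinner (z k l) ((\<chi> i j. 1) *v z k l)))
      = Re (cinner (z k k) ((\<chi> i j. 1) *v z k k))" if "k < r" for k
    using that by (simp add: sum.remove[of _ k] off_diag)
  have "(frob B)\<^sup>2 = Re (\<Sum>i\<in>UNIV. \<Sum>j\<in>UNIV. (\<chi> i j. 1) $ i $ j * (B$i$j * cnj (B$i$j)))"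
    unfolding frob_sq by (simp flip: complex_norm_square del: of_real_power)
  also have "\<dots> = (\<Sum>k<r. Re (cinner (z k k) ((\<chi> i j. 1) *v z k k)))"
    unfolding decomp by (simp add: diag_only)
  also have "\<dots> = (\<Sum>k<r. (\<Sum>i\<in>UNIV. w k i)\<^sup>2)"
  proof (rule sum.cong[OF refl])
    fix k
    have sum_w: "(\<Sum>i\<in>UNIV. (\<chi> i. complex_of_real (w k i)) $ i) = of_real (\<Sum>i\<in>UNIV. w k i)"
      by simp
    show "Re (cinner (z k k) ((\<chi> i j. 1) *v z k k)) = (\<Sum>i\<in>UNIV. w k i)\<^sup>2"
      unfolding cinner_ones_mat_vec z_diag sum_w norm_of_real by simp
  qed
  finally have frob_B: "(frob B)\<^sup>2 = (\<Sum>k<r. (\<Sum>i\<in>UNIV. w k i)\<^sup>2)" .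
  have "\<mu> * (frob B)\<^sup>2 \<le> (\<Sum>k<r. Re (cinner (z k k) (C *v z k k)))"
    unfolding frob_B sum_distrib_left z_diag by (intro sum_mono test) (simp add: w_def)
  also have "\<dots> \<le> (\<Sum>k<r. \<Sum>l<r. Re (cinner (z k l) (C *v z k l)))"
    using C unfolding psd_iff by (intro sum_mono member_le_sum) auto
  also have "\<dots> = Re (\<Sum>i\<in>UNIV. \<Sum>j\<in>UNIV. C$i$j * (B$i$j * cnj (B$i$j)))"
    unfolding decomp by simp
  finally show ?thesis .
qed

section \<open>Diagonal matrices dominating the Hadamard square\<close>

definition diag_mat :: "('n \<Rightarrow> real) \<Rightarrow> complex^'n^'n" where
  "diag_mat e = (\<chi> i j. if i = j then complex_of_real (e i) else 0)"

definition abs_sq_form :: "complex^'n^'n \<Rightarrow> ('n \<Rightarrow> real) \<Rightarrow> real" where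
  "abs_sq_form A w = (\<Sum>i\<in>UNIV. \<Sum>j\<in>UNIV. (cmod (A$i$j))\<^sup>2 * w i * w j)"

lemma abs_sq_form_nonneg: "(\<And>i. 0 \<le> w i) \<Longrightarrow> 0 \<le> abs_sq_form A w"
  unfolding abs_sq_form_def by (intro sum_nonneg mult_nonneg_nonneg) auto

lemma cinner_hadamard_conj_real:
  "Re (cinner (\<chi> i. of_real (w i)) (hadamard A (conj_mat A) *v (\<chi> i. of_real (w i))))
     = abs_sq_form A w"
  unfolding cinner_mat_vec hadamard_conj_entry abs_sq_form_def by (simp add: mult_ac)

lemma Re_cinner_diag_mat: "Re (cinner x (diag_mat e *v x)) = (\<Sum>i\<in>UNIV. e i * (cmod (x$i))\<^sup>2)"
proof -
  have "cinner x (diag_mat e *v x) = (\<Sum>i\<in>UNIV. of_real (e i) * (cnj (x$i) * x$i))"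
    unfolding cinner_mat_vec diag_mat_def by (simp add: if_distrib if_distribR mult_ac cong: if_cong)
  also have "\<dots> = of_real (\<Sum>i\<in>UNIV. e i * (cmod (x$i))\<^sup>2)"
    by (simp add: of_real_sum complex_norm_square mult.commute del: of_real_power)
  finally show ?thesis by (simp only: Re_complex_of_real)
qed

lemma hermitian_diag_mat: "hermitian (diag_mat e)"
  unfolding hermitian_def diag_mat_def by simp

lemma psd_diag_mat: "(\<And>i. 0 \<le> e i) \<Longrightarrow> psd (diag_mat e)"
  unfolding psd_iff Re_cinner_diag_mat by (simp add: hermitian_diag_mat sum_nonneg)

lemma diag_mat_mult: "diag_mat d ** diag_mat e = diag_mat (\<lambda>i. d i * e i)"
proof -
  have "(diag_mat d ** diag_mat e) $ i $ j
      = (\<Sum>k\<in>UNIV. if k = i then diag_mat (\<lambda>i. d i * e i) $ i $ j else 0)" for i j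
    unfolding diag_mat_def matrix_matrix_mult_def vec_lambda_beta by (intro sum.cong) auto
  then show ?thesis by (simp add: vec_eq_iff)
qed

lemma pos_diag_Re_pos: "pos_diag D \<Longrightarrow> 0 < Re (D$i$i)"
  unfolding pos_diag_def by blast

lemma pos_diag_eq_diag_mat: "pos_diag D \<Longrightarrow> D = diag_mat (\<lambda>i. Re (D$i$i))"
  unfolding pos_diag_def diag_mat_def by (simp add: vec_eq_iff complex_eq_iff)

lemma pos_diag_diag_mat: "(\<And>i. 0 < e i) \<Longrightarrow> pos_diag (diag_mat e)"
  unfolding pos_diag_def diag_mat_def by simp

lemma pos_diag_mult_self: "pos_diag D \<Longrightarrow> D ** D = diag_mat (\<lambda>i. (Re (D$i$i))\<^sup>2)"
  by (subst (1 2) pos_diag_eq_diag_mat) (simp_all add: diag_mat_mult power2_eq_square)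

lemma two_mult_le_weighted_squares:
  fixes a b p q :: real
  assumes "p > 0" "q > 0"
  shows "2 * (a * b) \<le> q / p * a\<^sup>2 + p / q * b\<^sup>2"
proof -
  have "0 \<le> (q * a - p * b)\<^sup>2 / (p * q)" using assms by simp
  also have "\<dots> = q / p * a\<^sup>2 + p / q * b\<^sup>2 - 2 * (a * b)"
    using assms by (simp add: field_simps power2_eq_square)
  finally show ?thesis by simp
qed

lemma schur_test:
  fixes A :: "complex^'n^'n"
  assumes A: "hermitian A" and u: "\<And>i. 0 < u i"
    and e: "\<And>i. (\<Sum>j\<in>UNIV. (cmod (A$i$j))\<^sup>2 * u j) / u i \<le> e i"
  shows "loewner_le (hadamard A (conj_mat A)) (diag_mat e)"
  unfolding loewner_le_def psd_iff
proof (intro conjI allI)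
  define c where "c i j = (cmod (A$i$j))\<^sup>2" for i j
  have c_sym: "c i j = c j i" for i j
    using A unfolding hermitian_def c_def by (metis complex_mod_cnj)
  have c_nonneg: "0 \<le> c i j" for i j by (simp add: c_def)
  show "hermitian (diag_mat e - hadamard A (conj_mat A))"
    by (rule hermitian_diff[OF hermitian_diag_mat])
      (simp add: hermitian_def hadamard_conj_entry c_sym[unfolded c_def])
  fix x :: "complex^'n"
  define a where "a i = cmod (x$i)" for i
  have "Re (cinner x (hadamard A (conj_mat A) *v x)) = (\<Sum>i\<in>UNIV. \<Sum>j\<in>UNIV. c i j * Re (cnj (x$i) * x$j))"
    unfolding cinner_mat_vec hadamard_conj_entry c_def by (simp add: algebra_simps)
  also have "\<dots> \<le> (\<Sum>i\<in>UNIV. \<Sum>j\<in>UNIV. c i j * (a i * a j))"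
    unfolding a_def
    by (intro sum_mono mult_left_mono c_nonneg) (metis complex_Re_le_cmod complex_mod_cnj norm_mult)
  also have "\<dots> = (\<Sum>i\<in>UNIV. \<Sum>j\<in>UNIV. c i j * (2 * (a i * a j))) / 2"
    by (simp add: sum_divide_distrib)
  finally have "2 * Re (cinner x (hadamard A (conj_mat A) *v x))
      \<le> (\<Sum>i\<in>UNIV. \<Sum>j\<in>UNIV. c i j * (2 * (a i * a j)))"
    by simp
  also have "\<dots> \<le> (\<Sum>i\<in>UNIV. \<Sum>j\<in>UNIV. c i j * (u j / u i * (a i)\<^sup>2 + u i / u j * (a j)\<^sup>2))"
    by (intro sum_mono mult_left_mono c_nonneg two_mult_le_weighted_squares u)
  also have "\<dots> = 2 * (\<Sum>i\<in>UNIV. \<Sum>j\<in>UNIV. c i j * (u j / u i * (a i)\<^sup>2))"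
  proof -
    have "(\<Sum>i\<in>UNIV. \<Sum>j\<in>UNIV. c i j * (u i / u j * (a j)\<^sup>2))
        = (\<Sum>i\<in>UNIV. \<Sum>j\<in>UNIV. c i j * (u j / u i * (a i)\<^sup>2))"
      by (subst sum.swap) (simp add: c_sym)
    then show ?thesis by (simp add: distrib_left sum.distrib)
  qed
  also have "(\<Sum>i\<in>UNIV. \<Sum>j\<in>UNIV. c i j * (u j / u i * (a i)\<^sup>2))
      = (\<Sum>i\<in>UNIV. (a i)\<^sup>2 * ((\<Sum>j\<in>UNIV. c i j * u j) / u i))"
    by (simp add: sum_distrib_left sum_divide_distrib mult_ac)
  also have "\<dots> \<le> (\<Sum>i\<in>UNIV. (a i)\<^sup>2 * e i)"
    by (intro sum_mono mult_left_mono) (simp_all add: c_def e)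
  also have "\<dots> = Re (cinner x (diag_mat e *v x))"
    unfolding Re_cinner_diag_mat a_def by (simp add: mult.commute)
  finally show "0 \<le> Re (cinner x ((diag_mat e - hadamard A (conj_mat A)) *v x))"
    by (simp add: matrix_vector_mult_diff_rdistrib cinner_diff_right)
qed

lemma exists_dominating_diag:
  fixes A :: "complex^'n^'n"
  assumes A: "hermitian A" and u: "\<And>i. 0 < u i" and "0 < t"
  shows "\<exists>e. (\<forall>i. 0 < e i) \<and> loewner_le (hadamard A (conj_mat A)) (diag_mat e) \<and>
           (\<Sum>i\<in>UNIV. u i)\<^sup>2 \<le> (\<Sum>i\<in>UNIV. 1 / e i) * (abs_sq_form A u + t * (\<Sum>i\<in>UNIV. (u i)\<^sup>2))"
proof (intro exI conjI allI)
  (* the summand t keeps e positive when a row of A vanishes *)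
  define e where "e i = (\<Sum>j\<in>UNIV. (cmod (A$i$j))\<^sup>2 * u j) / u i + t" for i
  show e_pos: "0 < e i" for i
    using u \<open>0 < t\<close> unfolding e_def
    by (intro add_nonneg_pos divide_nonneg_pos sum_nonneg mult_nonneg_nonneg) (auto intro: less_imp_le)
  show "loewner_le (hadamard A (conj_mat A)) (diag_mat e)"
    by (rule schur_test[where u = u, OF A u]) (simp add: e_def \<open>0 < t\<close> less_imp_le)
  have "(1 / sqrt (e i)) * (u i * sqrt (e i)) = u i" for i
    using e_pos[of i] by simp
  then have "(\<Sum>i\<in>UNIV. u i)\<^sup>2 = (\<Sum>i\<in>UNIV. (1 / sqrt (e i)) * (u i * sqrt (e i)))\<^sup>2"
    by simp
  also have "\<dots> \<le> (\<Sum>i\<in>UNIV. (1 / sqrt (e i))\<^sup>2) * (\<Sum>i\<in>UNIV. (u i * sqrt (e i))\<^sup>2)"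
    by (rule Cauchy_Schwarz_ineq_sum)
  also have "\<dots> = (\<Sum>i\<in>UNIV. 1 / e i) * (\<Sum>i\<in>UNIV. (u i)\<^sup>2 * e i)"
    using e_pos by (simp add: power_divide power_mult_distrib less_imp_le)
  also have "(\<Sum>i\<in>UNIV. (u i)\<^sup>2 * e i) = abs_sq_form A u + t * (\<Sum>i\<in>UNIV. (u i)\<^sup>2)"
  proof -
    have "(u i)\<^sup>2 * e i = u i * (\<Sum>j\<in>UNIV. (cmod (A$i$j))\<^sup>2 * u j) + t * (u i)\<^sup>2" for i
      using u[of i] by (simp add: e_def field_simps power2_eq_square)
    then show ?thesis
      unfolding abs_sq_form_def by (simp add: sum.distrib sum_distrib_left mult_ac)
  qed
  finally show "(\<Sum>i\<in>UNIV. u i)\<^sup>2 \<le> (\<Sum>i\<in>UNIV. 1 / e i) * (abs_sq_form A u + t * (\<Sum>i\<in>UNIV. (u i)\<^sup>2))" .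
qed

lemma abs_sq_form_lower_bound:
  fixes A :: "complex^'n^'n"
  assumes A: "hermitian A" and "0 \<le> \<mu>" and w: "\<And>i. 0 \<le> w i"
    and bound: "\<And>e. \<forall>i. 0 < e i \<Longrightarrow> loewner_le (hadamard A (conj_mat A)) (diag_mat e) \<Longrightarrow>
      \<mu> * (\<Sum>i\<in>UNIV. 1 / e i) \<le> 1"
  shows "\<mu> * (\<Sum>i\<in>UNIV. w i)\<^sup>2 \<le> abs_sq_form A w"
proof -
  (* bound the form at the positive weights w + t, then let t tend to 0 *)
  define N where "N t = abs_sq_form A (\<lambda>i. w i + t) + t * (\<Sum>i\<in>UNIV. (w i + t)\<^sup>2)" for t
  have "\<mu> * (\<Sum>i\<in>UNIV. w i + t)\<^sup>2 \<le> N t" if "0 < t" for t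
  proof -
    have u: "0 < w i + t" for i using w[of i] \<open>0 < t\<close> by simp
    obtain e where e_pos: "\<forall>i. 0 < e i" and dom: "loewner_le (hadamard A (conj_mat A)) (diag_mat e)"
      and cs: "(\<Sum>i\<in>UNIV. w i + t)\<^sup>2 \<le> (\<Sum>i\<in>UNIV. 1 / e i) * N t"
      using exists_dominating_diag[where u = "\<lambda>i. w i + t", OF A u \<open>0 < t\<close>, folded N_def]
      by blast
    have "\<mu> * (\<Sum>i\<in>UNIV. 1 / e i) \<le> 1" using e_pos dom by (rule bound)
    have "0 \<le> N t"
      unfolding N_def using w \<open>0 < t\<close>
      by (intro add_nonneg_nonneg abs_sq_form_nonneg mult_nonneg_nonneg sum_nonneg) (auto intro: less_imp_le)
    have "\<mu> * (\<Sum>i\<in>UNIV. w i + t)\<^sup>2 \<le> (\<mu> * (\<Sum>i\<in>UNIV. 1 / e i)) * N t"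
      using mult_left_mono[OF cs \<open>0 \<le> \<mu>\<close>] by (simp add: mult.assoc)
    also have "\<dots> \<le> N t"
      using mult_right_mono[OF \<open>\<mu> * (\<Sum>i\<in>UNIV. 1 / e i) \<le> 1\<close> \<open>0 \<le> N t\<close>] by simp
    finally show ?thesis .
  qed
  then have "eventually (\<lambda>t. \<mu> * (\<Sum>i\<in>UNIV. w i + t)\<^sup>2 \<le> N t) (at_right 0)"
    by (intro eventually_at_rightI[of 0 1]) auto
  moreover have "((\<lambda>t. \<mu> * (\<Sum>i\<in>UNIV. w i + t)\<^sup>2) \<longlongrightarrow> \<mu> * (\<Sum>i\<in>UNIV. w i + 0)\<^sup>2) (at_right 0)"
    by (intro tendsto_intros)
  moreover have "(N \<longlongrightarrow> N 0) (at_right 0)"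
    unfolding N_def abs_sq_form_def by (intro tendsto_intros)
  ultimately have "\<mu> * (\<Sum>i\<in>UNIV. w i + 0)\<^sup>2 \<le> N 0"
    by (intro tendsto_le[OF trivial_limit_at_right_real]) 
  then show ?thesis by (simp add: N_def)
qed

section \<open>The value of I(2,A)\<close>

lemma I2_le_frob_hadamard:
  assumes "psd B" "frob B = 1"
  shows "I2 A \<le> frob (hadamard A B)"
  unfolding I2_def
proof (rule cInf_lower)
  show "frob (hadamard A B) \<in> {frob (hadamard A B) |B. psd B \<and> frob B = 1}"
    using assms by blast
  show "bdd_below {frob (hadamard A B) |B. psd B \<and> frob B = 1}"
    by (rule bdd_belowI[of _ 0]) (auto simp: frob_nonneg)
qed

lemma powr_neg_half_sq: "0 < S \<Longrightarrow> (S powr (-1/2))\<^sup>2 = 1 / (S::real)"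
  by (simp add: power2_eq_square powr_add[symmetric] powr_minus_divide)

lemma I2_le_diag_bound:
  fixes A :: "complex^'n^'n"
  assumes e: "\<And>i. 0 < e i" and dom: "loewner_le (hadamard A (conj_mat A)) (diag_mat e)"
  shows "I2 A \<le> (\<Sum>i\<in>UNIV. 1 / e i) powr (-1/2)"
proof -
  define S where "S = (\<Sum>i\<in>UNIV. 1 / e i)"
  have "0 < S" unfolding S_def using e by (simp add: sum_pos)
  define w where "w i = 1 / (e i * S)" for i
  have w_nonneg: "0 \<le> w i" for i using e[of i] \<open>0 < S\<close> by (simp add: w_def)
  have "(\<Sum>i\<in>UNIV. w i) = (\<Sum>i\<in>UNIV. 1 / e i) / S"
    unfolding w_def by (simp add: sum_divide_distrib divide_divide_eq_left)
  then have sum_w: "(\<Sum>i\<in>UNIV. w i) = 1"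
    using \<open>0 < S\<close> by (simp add: S_def)
  define v :: "complex^'n" where "v = (\<chi> i. of_real (sqrt (w i)))"
  define B where "B = outer v"
  have "(norm v)\<^sup>2 = 1"
    unfolding norm_sq_vec v_def using sum_w w_nonneg by simp
  then have "frob B = 1" by (simp add: B_def frob_outer)
  have "(frob (hadamard A B))\<^sup>2 = abs_sq_form A w"
    unfolding frob_sq abs_sq_form_def B_def v_def hadamard_def outer_def
    using w_nonneg by (simp add: norm_mult power_mult_distrib mult_ac)
  also have "\<dots> \<le> Re (cinner (\<chi> i. of_real (w i)) (diag_mat e *v (\<chi> i. of_real (w i))))"
    unfolding cinner_hadamard_conj_real[symmetric] using dom by (rule loewner_le_Re_cinner)
  also have "\<dots> = (\<Sum>i\<in>UNIV. e i * (w i)\<^sup>2)"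
    unfolding Re_cinner_diag_mat using w_nonneg by simp
  also have "\<dots> = (\<Sum>i\<in>UNIV. 1 / e i) / S\<^sup>2"
  proof -
    have "e i * (w i)\<^sup>2 = 1 / e i / S\<^sup>2" for i
      using e[of i] by (simp add: w_def power2_eq_square)
    then show ?thesis by (simp add: sum_divide_distrib)
  qed
  also have "\<dots> = (S powr (-1/2))\<^sup>2"
    unfolding powr_neg_half_sq[OF \<open>0 < S\<close>] using \<open>0 < S\<close>
    by (simp add: S_def[symmetric] power2_eq_square)
  finally have "frob (hadamard A B) \<le> S powr (-1/2)"
    by (rule power2_le_imp_le) simp
  moreover have "I2 A \<le> frob (hadamard A B)"
    using psd_outer \<open>frob B = 1\<close> unfolding B_def by (rule I2_le_frob_hadamard)
  ultimately show ?thesis by (simp add: S_def)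
qed

lemma diag_bound_mult_frob_le_frob_hadamard:
  fixes A B :: "complex^'n^'n"
  assumes A: "psd A" and B: "psd B" and "0 \<le> \<tau>"
    and below: "\<And>e. \<forall>i. 0 < e i \<Longrightarrow> loewner_le (hadamard A (conj_mat A)) (diag_mat e) \<Longrightarrow>
      \<tau> \<le> (\<Sum>i\<in>UNIV. 1 / e i) powr (-1/2)"
  shows "\<tau> * frob B \<le> frob (hadamard A B)"
proof -
  have "\<tau>\<^sup>2 * (\<Sum>i\<in>UNIV. 1 / e i) \<le> 1"
    if e: "\<forall>i. 0 < e i" and dom: "loewner_le (hadamard A (conj_mat A)) (diag_mat e)" for e
  proof -
    have S_pos: "0 < (\<Sum>i\<in>UNIV. 1 / e i)" using e by (simp add: sum_pos)
    have "\<tau>\<^sup>2 \<le> ((\<Sum>i\<in>UNIV. 1 / e i) powr (-1/2))\<^sup>2"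
      using below[OF e dom] \<open>0 \<le> \<tau>\<close> by (rule power_mono)
    also have "\<dots> = 1 / (\<Sum>i\<in>UNIV. 1 / e i)"
      by (rule powr_neg_half_sq[OF S_pos])
    finally show ?thesis using S_pos by (simp add: field_simps)
  qed
  then have "\<tau>\<^sup>2 * (\<Sum>i\<in>UNIV. w i)\<^sup>2
      \<le> Re (cinner (\<chi> i. of_real (w i)) (hadamard A (conj_mat A) *v (\<chi> i. of_real (w i))))"
    if "\<And>i. 0 \<le> w i" for w
    unfolding cinner_hadamard_conj_real
    using A that by (intro abs_sq_form_lower_bound) (auto simp: psd_iff)
  then have "\<tau>\<^sup>2 * (frob B)\<^sup>2 \<le> (frob (hadamard A B))\<^sup>2"
    unfolding frob_hadamard_sq by (rule frob_sq_le_hadamard_weighted_sum[OF psd_hadamard_conj[OF A] B])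
  then have "(\<tau> * frob B)\<^sup>2 \<le> (frob (hadamard A B))\<^sup>2"
    by (simp only: power_mult_distrib)
  from this frob_nonneg show ?thesis by (rule power2_le_imp_le)
qed

lemma I2_eq_Inf_diag_bounds:
  fixes A :: "complex^'n^'n"
  assumes A: "psd A"
  shows "I2 A = Inf {(\<Sum>i\<in>UNIV. 1 / e i) powr (-1/2) | e.
                      (\<forall>i. 0 < e i) \<and> loewner_le (hadamard A (conj_mat A)) (diag_mat e)}"
    (is "_ = Inf ?T")
proof (rule antisym)
  have "\<exists>e. (\<forall>i. 0 < e i) \<and> loewner_le (hadamard A (conj_mat A)) (diag_mat e)"
    using exists_dominating_diag[of A "\<lambda>_. 1" 1] A unfolding psd_iff by auto
  then have "?T \<noteq> {}" by blast
  have "bdd_below ?T" by (rule bdd_belowI[of _ 0]) auto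
  show "I2 A \<le> Inf ?T"
    using \<open>?T \<noteq> {}\<close>
  proof (rule cInf_greatest)
    fix x assume "x \<in> ?T"
    then obtain e where "x = (\<Sum>i\<in>UNIV. 1 / e i) powr (-1/2)" "\<forall>i. 0 < e i"
      and "loewner_le (hadamard A (conj_mat A)) (diag_mat e)"
      by blast
    then show "I2 A \<le> x" using I2_le_diag_bound[of e A] by simp
  qed
  have "0 \<le> Inf ?T"
    using \<open>?T \<noteq> {}\<close> by (rule cInf_greatest) auto
  have "Inf ?T \<le> frob (hadamard A B)" if "psd B" "frob B = 1" for B
  proof -
    have "Inf ?T * frob B \<le> frob (hadamard A B)"
    proof (rule diag_bound_mult_frob_le_frob_hadamard[OF A \<open>psd B\<close> \<open>0 \<le> Inf ?T\<close>])
      fix e assume "\<forall>i. 0 < e i" "loewner_le (hadamard A (conj_mat A)) (diag_mat e)"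
      then show "Inf ?T \<le> (\<Sum>i\<in>UNIV. 1 / e i) powr (-1/2)"
        by (intro cInf_lower[OF _ \<open>bdd_below ?T\<close>]) blast
    qed
    then show ?thesis using \<open>frob B = 1\<close> by simp
  qed
  moreover have "psd (outer (axis i 1)) \<and> frob (outer (axis i (1::complex))) = 1" for i :: 'n
    by (simp add: psd_outer frob_outer)
  ultimately show "Inf ?T \<le> I2 A"
    unfolding I2_def by (intro cInf_greatest) auto
qed

lemma pos_diag_bounds_eq_diag_bounds:
  "{(\<Sum>i\<in>UNIV. 1 / (Re (D$i$i))\<^sup>2) powr (-1/2) | D. pos_diag D \<and> loewner_le C (D ** D)}
   = {(\<Sum>i\<in>UNIV. 1 / e i) powr (-1/2) | e. (\<forall>i. 0 < e i) \<and> loewner_le C (diag_mat e)}"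
proof (intro set_eqI iffI)
  fix x assume "x \<in> {(\<Sum>i\<in>UNIV. 1 / (Re (D$i$i))\<^sup>2) powr (-1/2) | D. pos_diag D \<and> loewner_le C (D ** D)}"
  then obtain D where x: "x = (\<Sum>i\<in>UNIV. 1 / (Re (D$i$i))\<^sup>2) powr (-1/2)"
    and D: "pos_diag D" and dom: "loewner_le C (D ** D)"
    by blast
  have "\<forall>i. 0 < (Re (D$i$i))\<^sup>2" by (intro allI zero_less_power pos_diag_Re_pos[OF D])
  with x dom show "x \<in> {(\<Sum>i\<in>UNIV. 1 / e i) powr (-1/2) | e. (\<forall>i. 0 < e i) \<and> loewner_le C (diag_mat e)}"
    unfolding pos_diag_mult_self[OF D] by (intro CollectI exI[where x = "\<lambda>i. (Re (D$i$i))\<^sup>2"]) simp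
next
  fix x assume "x \<in> {(\<Sum>i\<in>UNIV. 1 / e i) powr (-1/2) | e. (\<forall>i. 0 < e i) \<and> loewner_le C (diag_mat e)}"
  then obtain e where x: "x = (\<Sum>i\<in>UNIV. 1 / e i) powr (-1/2)"
    and e: "\<forall>i. 0 < e i" and dom: "loewner_le C (diag_mat e)"
    by blast
  define D where "D = diag_mat (\<lambda>i. sqrt (e i))"
  have "pos_diag D" unfolding D_def using e by (intro pos_diag_diag_mat) simp
  moreover have "loewner_le C (D ** D)"
    using dom e unfolding D_def diag_mat_mult by (simp add: less_imp_le)
  moreover have "x = (\<Sum>i\<in>UNIV. 1 / (Re (D$i$i))\<^sup>2) powr (-1/2)"
    unfolding x D_def diag_mat_def using e by (simp add: less_imp_le)
  ultimately show "x \<in> {(\<Sum>i\<in>UNIV. 1 / (Re (D$i$i))\<^sup>2) powr (-1/2) | D. pos_diag D \<and> loewner_le C (D ** D)}"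
    by blast
qed

lemma I2_pos_diag:
  assumes D: "pos_diag D"
  shows "I2 D = (\<Sum>i\<in>UNIV. 1 / (Re (D$i$i))\<^sup>2) powr (-1/2)"
proof -
  define e0 where "e0 i = (Re (D$i$i))\<^sup>2" for i
  have e0_pos: "0 < e0 i" for i unfolding e0_def by (intro zero_less_power pos_diag_Re_pos[OF D])
  have "psd D"
    using D psd_diag_mat[of "\<lambda>i. Re (D$i$i)"] unfolding pos_diag_def
    by (subst pos_diag_eq_diag_mat[OF D]) (simp add: less_imp_le)
  have "hadamard D (conj_mat D) = diag_mat e0"
    by (subst (1 2) pos_diag_eq_diag_mat[OF D])
      (simp add: vec_eq_iff hadamard_def conj_mat_def diag_mat_def e0_def power2_eq_square)
  then have "I2 D = Inf {(\<Sum>i\<in>UNIV. 1 / e i) powr (-1/2) | e.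
                      (\<forall>i. 0 < e i) \<and> loewner_le (diag_mat e0) (diag_mat e)}"
    using I2_eq_Inf_diag_bounds[OF \<open>psd D\<close>] by simp
  also have "\<dots> = (\<Sum>i\<in>UNIV. 1 / e0 i) powr (-1/2)"
  proof (rule cInf_eq_minimum)
    show "(\<Sum>i\<in>UNIV. 1 / e0 i) powr (-1/2) \<in> {(\<Sum>i\<in>UNIV. 1 / e i) powr (-1/2) | e.
                      (\<forall>i. 0 < e i) \<and> loewner_le (diag_mat e0) (diag_mat e)}"
      using e0_pos loewner_le_refl by blast
    fix y assume "y \<in> {(\<Sum>i\<in>UNIV. 1 / e i) powr (-1/2) | e.
                      (\<forall>i. 0 < e i) \<and> loewner_le (diag_mat e0) (diag_mat e)}"
    then obtain e where y: "y = (\<Sum>i\<in>UNIV. 1 / e i) powr (-1/2)" and e: "\<forall>i. 0 < e i"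
      and dom: "loewner_le (diag_mat e0) (diag_mat e)"
      by blast
    have "e0 i \<le> e i" for i
      using loewner_le_diag_entry[OF dom, of i] by (simp add: diag_mat_def)
    then have "(\<Sum>i\<in>UNIV. 1 / e i) \<le> (\<Sum>i\<in>UNIV. 1 / e0 i)"
      using e0_pos e by (intro sum_mono divide_left_mono) (auto intro: mult_pos_pos)
    moreover have "0 < (\<Sum>i\<in>UNIV. 1 / e i)" using e by (simp add: sum_pos)
    ultimately show "(\<Sum>i\<in>UNIV. 1 / e0 i) powr (-1/2) \<le> y"
      unfolding y by (intro powr_mono2') auto
  qed
  finally show ?thesis by (simp add: e0_def)
qed

theorem corollary3p4:
  fixes A :: "complex^'n^'n"
  assumes "psd A"
  shows "I2 A = Inf {(\<Sum>i\<in>UNIV. 1 / (Re (D$i$i))\<^sup>2) powr (-1/2) | D.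
                      pos_diag D \<and> loewner_le (hadamard A (conj_mat A)) (D ** D)}
       \<and> I2 A = Inf {I2 D | D. pos_diag D \<and> loewner_le (hadamard A (conj_mat A)) (D ** D)}"
proof -
  have "I2 A = Inf {(\<Sum>i\<in>UNIV. 1 / (Re (D$i$i))\<^sup>2) powr (-1/2) | D.
                      pos_diag D \<and> loewner_le (hadamard A (conj_mat A)) (D ** D)}"
    unfolding pos_diag_bounds_eq_diag_bounds by (rule I2_eq_Inf_diag_bounds[OF assms])
  moreover have "{I2 D | D. pos_diag D \<and> loewner_le (hadamard A (conj_mat A)) (D ** D)}
      = {(\<Sum>i\<in>UNIV. 1 / (Re (D$i$i))\<^sup>2) powr (-1/2) | D.
                      pos_diag D \<and> loewner_le (hadamard A (conj_mat A)) (D ** D)}"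
    unfolding setcompr_eq_image by (rule image_cong[OF refl]) (simp add: I2_pos_diag)
  ultimately show ?thesis by simp
qed

end
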